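(* For all positive integers $\alpha$ and $k$, the graph $G^{\alpha+1}_{3k+3\alpha-1}$ satisfies $\mathrm{ecrw}_\alpha(G^{\alpha+1}_{3k+3\alpha-1})\ge k+1$.
   Context: For positive integers $n,k$, the graph $G^n_k$ is defined as follows: let $A=\{a_1,\dots,a_n\}$, let $B$ be the set of 2-element subsets of $A$, and let $B_k=\{(W,\ell):W\in B,\ \ell\in[k]\}$. Then $V(G^n_k)=A\cup B_k$, and $a\in A$ is adjacent to $(W,\ell)\in B_k$ iff $a\in W$; there are no other edges. A tree-cut decomposition of a graph $G$ is a pair $\mathcal{T}=(T,\{X_t\}_{t\in V(T)})$ where $T$ is a tree and the bags $X_t\subseteq V(G)$ are pairwise disjoint (possibly empty) with $\bigcup_{t\in V(T)}X_t=V(G)$. For a node $t$ of $T$, let $T_1,\dots,T_m$ be the connected components of $T-t$ and $Z_i=\bigcup_{s\in V(T_i)}X_s$; $\mathrm{cross}_{\mathcal{T}}(t)$ is the number of edges of $G$ whose two endpoints lie in two distinct sets among $Z_1,\dots,Z_m$ (if $T$ has one node, $\mathrm{cross}_{\mathcal T}(t)=0$). The crossing number of $\mathcal{T}$ is $\max_{t}\mathrm{cross}_{\mathcal{T}}(t)$, and the thickness of $\mathcal{T}$ is $\max_t|X_t|$. $\mathrm{ecrw}_\alpha(G)$ is the minimum crossing number over tree-cut decompositions of $G$ of thickness at most $\alpha$. *)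

theory Defs
  imports Main
begin

definition reach_in :: "'n set \<Rightarrow> 'n set set \<Rightarrow> 'n \<Rightarrow> 'n \<Rightarrow> bool" where
  "reach_in S E u v \<longleftrightarrow> u \<in> S \<and> (\<lambda>x y. x \<in> S \<and> y \<in> S \<and> {x, y} \<in> E)\<^sup>*\<^sup>* u v"

definition has_cycle :: "'n set set \<Rightarrow> bool" where
  "has_cycle E \<longleftrightarrow> (\<exists>xs. length xs \<ge> 3 \<and> distinct xs \<and>
      (\<forall>i < length xs. {xs ! i, xs ! ((i + 1) mod length xs)} \<in> E))"

definition is_tree :: "'n set \<Rightarrow> 'n set set \<Rightarrow> bool" where
  "is_tree N E \<longleftrightarrow> finite N \<and> N \<noteq> {} \<and>
     (\<forall>e\<in>E. \<exists>u v. e = {u, v} \<and> u \<noteq> v \<and> u \<in> N \<and> v \<in> N) \<and>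
     (\<forall>u\<in>N. \<forall>v\<in>N. reach_in N E u v) \<and> \<not> has_cycle E"

text \<open>(N, ET) is the tree T, X t the bag of node t; V, EG the graph G.\<close>
definition tree_cut_decomp ::
  "'v set \<Rightarrow> 'v set set \<Rightarrow> 'n set \<Rightarrow> 'n set set \<Rightarrow> ('n \<Rightarrow> 'v set) \<Rightarrow> bool" where
  "tree_cut_decomp V EG N ET X \<longleftrightarrow> is_tree N ET \<and>
     (\<forall>s\<in>N. \<forall>t\<in>N. s \<noteq> t \<longrightarrow> X s \<inter> X t = {}) \<and>
     (\<Union>t\<in>N. X t) = V"

definition cross_at ::
  "'v set set \<Rightarrow> 'n set \<Rightarrow> 'n set set \<Rightarrow> ('n \<Rightarrow> 'v set) \<Rightarrow> 'n \<Rightarrow> nat" where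
  "cross_at EG N ET X t = card {e \<in> EG. \<exists>u v s s'. e = {u, v} \<and>
      s \<in> N - {t} \<and> s' \<in> N - {t} \<and> u \<in> X s \<and> v \<in> X s' \<and>
      \<not> reach_in (N - {t}) ET s s'}"

definition crossing_number ::
  "'v set set \<Rightarrow> 'n set \<Rightarrow> 'n set set \<Rightarrow> ('n \<Rightarrow> 'v set) \<Rightarrow> nat" where
  "crossing_number EG N ET X = Max ((\<lambda>t. cross_at EG N ET X t) ` N)"

definition thickness :: "'n set \<Rightarrow> ('n \<Rightarrow> 'v set) \<Rightarrow> nat" where
  "thickness N X = Max ((\<lambda>t. card (X t)) ` N)"

text \<open>ecrw_alpha(G): minimum crossing number over tree-cut decompositions of thickness
  at most alpha (tree nodes taken w.l.o.g. from nat).\<close>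
definition ecrw :: "nat \<Rightarrow> 'v set \<Rightarrow> 'v set set \<Rightarrow> nat" where
  "ecrw \<alpha> V EG = Inf {crossing_number EG N ET X | (N :: nat set) ET X.
       tree_cut_decomp V EG N ET X \<and> thickness N X \<le> \<alpha>}"

text \<open>A = {a_1..a_n} is Inl ` {1..n}; B_k consists of Inr (W, l) with W a 2-subset
  of {1..n} and l in {1..k}.\<close>
definition Gk_vertices :: "nat \<Rightarrow> nat \<Rightarrow> (nat + (nat set \<times> nat)) set" where
  "Gk_vertices n k = Inl ` {1..n} \<union>
     Inr ` {(W, l). W \<subseteq> {1..n} \<and> card W = 2 \<and> l \<in> {1..k}}"

definition Gk_edges :: "nat \<Rightarrow> nat \<Rightarrow> (nat + (nat set \<times> nat)) set set" where
  "Gk_edges n k = {{Inl a, Inr (W, l)} | a W l.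
     a \<in> {1..n} \<and> W \<subseteq> {1..n} \<and> card W = 2 \<and> l \<in> {1..k} \<and> a \<in> W}"

end

theory Submission
  imports Defs "HOL-Library.Transitive_Closure_Table"
begin

text \<open>Fix a node t whose bag contains a vertex a_1. Since bags have at most \<alpha> < n elements,
  some a_j lies outside X t; let t' be the neighbour of t towards its bag. If X t' contains
  some a_q, then of the K copies of the subdivision vertex for {a_1, a_q}, at least K - 2\<alpha>
  lie outside X t \<union> X t', and since t and t' cannot both be on the same side of each of them,
  each contributes an edge crossing at t or at t'. Otherwise a_1 and a_j are separated
  at t', and each of the at least K - \<alpha> copies of the vertex for {a_1, a_j} outside X t'
  contributes an edge crossing at t'. Either way twice the crossing number is at least
  K - 2\<alpha>, which for K = 3k + 3\<alpha> - 1 gives the bound k + 1.\<close>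

lemma reach_in_refl: "u \<in> S \<Longrightarrow> reach_in S E u u"
  by (simp add: reach_in_def)

lemma reach_in_memD:
  assumes "reach_in S E u v"
  shows "u \<in> S" and "v \<in> S"
proof -
  have "(\<lambda>x y. x \<in> S \<and> y \<in> S \<and> {x, y} \<in> E)\<^sup>*\<^sup>* u v" "u \<in> S"
    using assms by (auto simp: reach_in_def)
  then show "u \<in> S" "v \<in> S" by (induct rule: rtranclp_induct) auto
qed

lemma reach_in_sym:
  assumes "reach_in S E u v"
  shows "reach_in S E v u"
proof -
  let ?r = "\<lambda>x y. x \<in> S \<and> y \<in> S \<and> {x, y} \<in> E"
  have "symp ?r" by (auto intro: sympI simp: insert_commute)
  then have "?r\<^sup>*\<^sup>* v u"
    using assms by (auto simp: reach_in_def intro: sympD[OF symp_rtranclp])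
  then show ?thesis using reach_in_memD(2)[OF assms] by (simp add: reach_in_def)
qed

lemma reach_in_trans: "reach_in S E u v \<Longrightarrow> reach_in S E v w \<Longrightarrow> reach_in S E u w"
  unfolding reach_in_def by (blast intro: rtranclp_trans)

lemma reach_in_step:
  assumes "reach_in S E u v" and "w \<in> S" and "{v, w} \<in> E"
  shows "reach_in S E u w"
  using assms reach_in_memD(2)[OF assms(1)]
  by (auto simp: reach_in_def intro: rtranclp.rtrancl_into_rtrancl)

lemma has_cycle_close_path:
  assumes ab: "reach_in S E a b" "a \<noteq> b"
    and c: "c \<notin> S" "{c, a} \<in> E" "{c, b} \<in> E"
  shows "has_cycle E"
proof -
  let ?r = "\<lambda>x y. x \<in> S \<and> y \<in> S \<and> {x, y} \<in> E"
  have "?r\<^sup>*\<^sup>* a b" using ab(1) by (simp add: reach_in_def)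
  then obtain ys0 where p0: "rtrancl_path ?r a ys0 b" by (auto simp only: rtranclp_eq_rtrancl_path)
  obtain ys where p: "rtrancl_path ?r a ys b" and d: "distinct (a # ys)"
    using rtrancl_path_distinct[OF p0] by blast
  have ne: "ys \<noteq> []" using p ab(2) by (cases rule: rtrancl_path.cases) simp_all
  have "set (a # ys) \<subseteq> S"
    using rtrancl_path_Range[OF p] reach_in_memD(1)[OF ab(1)] by auto
  define zs where "zs = c # a # ys"
  have len: "length zs = length ys + 2" by (simp add: zs_def)
  have "distinct zs" using d c(1) \<open>set (a # ys) \<subseteq> S\<close> by (auto simp: zs_def)
  moreover have "length zs \<ge> 3" using ne len by (cases ys) auto
  moreover have "{zs ! i, zs ! ((i + 1) mod length zs)} \<in> E" if i: "i < length zs" for i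
  proof -
    consider "i = 0" | j where "i = Suc j" "j < length ys" | "i = length ys + 1"
      using i len by (cases i) (auto simp: less_Suc_eq)
    then show ?thesis
    proof cases
      case 1
      then show ?thesis using c(2) len by (simp add: zs_def)
    next
      case (2 j)
      then have "?r ((a # ys) ! j) (ys ! j)" using rtrancl_path_nth[OF p] by blast
      then show ?thesis using 2 len by (simp add: zs_def)
    next
      case 3
      then have "zs ! i = b" using ne rtrancl_path_last[OF p ne] by (simp add: zs_def last_conv_nth)
      then show ?thesis using 3 len c(3) by (simp add: zs_def insert_commute)
    qed
  qed
  ultimately show ?thesis unfolding has_cycle_def by blast
qed

lemma reach_in_first_step:
  assumes "reach_in N E t c" "c \<noteq> t"
  shows "\<exists>t'. {t, t'} \<in> E \<and> t' \<in> N - {t} \<and> reach_in (N - {t}) E t' c"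
proof -
  have "(\<lambda>x y. x \<in> N \<and> y \<in> N \<and> {x, y} \<in> E)\<^sup>*\<^sup>* t c" using assms by (auto simp: reach_in_def)
  then show ?thesis using assms(2)
  proof (induct rule: rtranclp_induct)
    case (step b c)
    show ?case
    proof (cases "b = t")
      case True
      then show ?thesis using step by (auto intro: reach_in_refl)
    next
      case False
      then obtain t' where "{t, t'} \<in> E" "t' \<in> N - {t}" "reach_in (N - {t}) E t' b"
        using step by blast
      then show ?thesis using reach_in_step[of "N - {t}" E t' b c] step by auto
    qed
  qed simp
qed

lemma acyclic_edge_separates:
  assumes acyc: "\<not> has_cycle E" and e: "{t, t'} \<in> E" "t \<noteq> t'" "t' \<in> N"
    and r: "reach_in (N - {t'}) E t s"
  shows "\<not> reach_in (N - {t}) E t' s"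
proof -
  have "(\<lambda>x y. x \<in> N - {t'} \<and> y \<in> N - {t'} \<and> {x, y} \<in> E)\<^sup>*\<^sup>* t s"
    using r by (auto simp: reach_in_def)
  then show ?thesis
  proof (induct rule: rtranclp_induct)
    case base
    then show ?case using reach_in_memD(2)[of "N - {t}" E t' t] by auto
  next
    case (step x y)
    show ?case
    proof
      assume ry: "reach_in (N - {t}) E t' y"
      show False
      proof (cases "x = t")
        case True
        have "y \<noteq> t'" using step(2) by auto
        then have "has_cycle E"
          using has_cycle_close_path[OF ry _ _ e(1)] step(2) True by (auto simp: insert_commute)
        then show False using acyc by blast
      next
        case False
        then show False
          using reach_in_step[OF ry, of x] step(2,3) by (auto simp: insert_commute)
      qed
    qed
  qed
qed

lemma no_cycle_if_edges_share_vertex: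
  assumes "\<forall>e \<in> E. r \<in> e"
  shows "\<not> has_cycle E"
proof
  assume "has_cycle E"
  then obtain xs where len: "length xs \<ge> 3" and d: "distinct xs"
    and ed: "\<forall>i < length xs. {xs ! i, xs ! ((i + 1) mod length xs)} \<in> E"
    unfolding has_cycle_def by blast
  let ?j = "3 mod length xs"
  have r: "r \<in> {xs ! i, xs ! ((i + 1) mod length xs)}" if "i < length xs" for i
    using bspec[OF assms ed[rule_format, OF that]] .
  have l2: "2 < length xs" and j: "?j \<noteq> 1" "?j < length xs"
    using len by (cases "length xs = 3"; simp)+
  then have ne: "xs \<noteq> []" by auto
  have r01: "r = xs ! 0 \<or> r = xs ! 1" using r[of 0] ne by auto
  have r12: "r = xs ! 1 \<or> r = xs ! 2" using r[of 1] l2 by (auto simp: numeral_2_eq_2)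
  have r2j: "r = xs ! 2 \<or> r = xs ! ?j" using r[of 2] l2 by (auto simp: numeral_2_eq_2 numeral_3_eq_3)
  have neq: "xs ! i \<noteq> xs ! j" if "i < length xs" "j < length xs" "i \<noteq> j" for i j
    using d that by (simp add: nth_eq_iff_index_eq)
  show False
  proof (cases "r = xs ! 1")
    case True
    then show False using r2j neq[of 1 2] neq[of 1 ?j] j l2 by auto
  next
    case False
    then show False using r01 r12 neq[of 0 2] l2 ne by auto
  qed
qed

lemma star_is_tree:
  assumes "m \<ge> 1"
  shows "is_tree {0..<m} {{0, i} | i. 0 < i \<and> i < (m::nat)}"
proof -
  let ?N = "{0..<m}" and ?E = "{{0, i} | i. 0 < i \<and> i < m}"
  have to_centre: "reach_in ?N ?E u 0" if u: "u \<in> ?N" for u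
  proof (cases "u = 0")
    case True
    then show ?thesis using reach_in_refl[OF u] by simp
  next
    case False
    have "0 \<in> ?N" using assms by simp
    moreover have "{u, 0} \<in> ?E" using False u by (auto simp: insert_commute)
    ultimately show ?thesis by (rule reach_in_step[OF reach_in_refl[OF u]])
  qed
  have "reach_in ?N ?E u v" if "u \<in> ?N" "v \<in> ?N" for u v
    by (rule reach_in_trans[OF to_centre[OF that(1)] reach_in_sym[OF to_centre[OF that(2)]]])
  moreover have "\<not> has_cycle ?E" by (rule no_cycle_if_edges_share_vertex) blast
  ultimately show ?thesis using assms unfolding is_tree_def by fastforce
qed

lemma tree_cut_decomp_thickness_one:
  assumes "finite V" "V \<noteq> {}"
  shows "\<exists>(N::nat set) ET X. tree_cut_decomp V EG N ET X \<and> thickness N X \<le> 1"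
proof -
  define m where "m = card V"
  have m: "m \<ge> 1" using assms by (simp add: m_def Suc_le_eq card_gt_0_iff)
  obtain h where h: "bij_betw h {0..<m} V" using ex_bij_betw_nat_finite assms(1) m_def by blast
  define X where "X i = (if i < m then {h i} else {})" for i
  have "tree_cut_decomp V EG {0..<m} {{0, i} | i. 0 < i \<and> i < m} X"
    unfolding tree_cut_decomp_def
    using star_is_tree[OF m] h by (auto simp: X_def bij_betw_def inj_on_def)
  moreover have "thickness {0..<m} X \<le> 1"
    unfolding thickness_def using m by (auto simp: X_def intro!: Max.boundedI)
  ultimately show ?thesis by blast
qed

lemma card_bag_le_thickness:
  "finite N \<Longrightarrow> t \<in> N \<Longrightarrow> card (X t) \<le> thickness N X"
  unfolding thickness_def by simp

lemma cross_at_le_crossing_number: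
  "finite N \<Longrightarrow> t \<in> N \<Longrightarrow> cross_at EG N ET X t \<le> crossing_number EG N ET X"
  unfolding crossing_number_def by simp

lemma tree_cut_decomp_bag_exists:
  "tree_cut_decomp V EG N ET X \<Longrightarrow> v \<in> V \<Longrightarrow> \<exists>s \<in> N. v \<in> X s"
  unfolding tree_cut_decomp_def by blast

lemma tree_cut_decomp_bag_unique:
  "tree_cut_decomp V EG N ET X \<Longrightarrow> s \<in> N \<Longrightarrow> s' \<in> N \<Longrightarrow> v \<in> X s \<Longrightarrow> v \<in> X s' \<Longrightarrow> s = s'"
  unfolding tree_cut_decomp_def by blast

lemma tree_cut_decomp_finite_bag:
  "tree_cut_decomp V EG N ET X \<Longrightarrow> finite V \<Longrightarrow> s \<in> N \<Longrightarrow> finite (X s)"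
  unfolding tree_cut_decomp_def by (blast intro: finite_subset)

definition crossing_edges ::
  "'v set set \<Rightarrow> 'n set \<Rightarrow> 'n set set \<Rightarrow> ('n \<Rightarrow> 'v set) \<Rightarrow> 'n \<Rightarrow> 'v set set" where
  "crossing_edges EG N ET X t = {e \<in> EG. \<exists>u v s s'. e = {u, v} \<and>
      s \<in> N - {t} \<and> s' \<in> N - {t} \<and> u \<in> X s \<and> v \<in> X s' \<and>
      \<not> reach_in (N - {t}) ET s s'}"

lemma cross_at_eq_card_crossing_edges:
  "cross_at EG N ET X t = card (crossing_edges EG N ET X t)"
  unfolding cross_at_def crossing_edges_def ..

lemma crossing_edgesI:
  assumes "{u, v} \<in> EG" "s \<in> N - {t}" "s' \<in> N - {t}" "u \<in> X s" "v \<in> X s'"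
    "\<not> reach_in (N - {t}) ET s s'"
  shows "{u, v} \<in> crossing_edges EG N ET X t"
  unfolding crossing_edges_def using assms by blast

lemma crossing_edge_at_separating_node:
  assumes "{u, w} \<in> EG" "{v, w} \<in> EG"
    and "sa \<in> N - {t}" "sb \<in> N - {t}" "s \<in> N - {t}"
    and "u \<in> X sa" "v \<in> X sb" "w \<in> X s"
    and sep: "\<not> reach_in (N - {t}) ET sa sb"
  shows "{u, w} \<in> crossing_edges EG N ET X t \<or> {v, w} \<in> crossing_edges EG N ET X t"
proof (cases "reach_in (N - {t}) ET sa s")
  case True
  then have "\<not> reach_in (N - {t}) ET sb s"
    using sep by (blast dest: reach_in_sym reach_in_trans)
  then show ?thesis using assms by (blast intro: crossing_edgesI)
next
  case False
  then show ?thesis using assms by (blast intro: crossing_edgesI)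
qed

lemma crossing_edge_at_tree_edge:
  assumes acyc: "\<not> has_cycle ET" and e: "{t, t'} \<in> ET" "t \<noteq> t'" "t \<in> N" "t' \<in> N"
    and "{u, w} \<in> EG" "{v, w} \<in> EG"
    and "u \<in> X t" "v \<in> X t'" "w \<in> X s" "s \<in> N - {t, t'}"
  shows "{v, w} \<in> crossing_edges EG N ET X t \<or> {u, w} \<in> crossing_edges EG N ET X t'"
proof (cases "reach_in (N - {t'}) ET t s")
  case True
  then have "\<not> reach_in (N - {t}) ET t' s" by (rule acyclic_edge_separates[OF acyc e(1-2,4)])
  then show ?thesis using assms by (blast intro: crossing_edgesI)
next
  case False
  then show ?thesis using assms by (blast intro: crossing_edgesI)
qed

lemma finite_Gk_vertices: "finite (Gk_vertices n K)"
proof -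
  have "{(W, l). W \<subseteq> {1..n} \<and> card W = 2 \<and> l \<in> {1..K}} \<subseteq> Pow {1..n} \<times> {1..K}"
    by auto
  then have "finite {(W, l). W \<subseteq> {1..n} \<and> card W = 2 \<and> l \<in> {1..K}}"
    by (rule finite_subset) simp
  then show ?thesis unfolding Gk_vertices_def by simp
qed

lemma finite_Gk_edges: "finite (Gk_edges n K)"
proof (rule finite_subset)
  show "Gk_edges n K \<subseteq> Pow (Gk_vertices n K)"
    unfolding Gk_edges_def Gk_vertices_def by auto
qed (simp add: finite_Gk_vertices)

lemma Inl_in_Gk_vertices: "a \<in> {1..n} \<Longrightarrow> Inl a \<in> Gk_vertices n K"
  unfolding Gk_vertices_def by simp

lemma Inr_in_Gk_vertices:
  "W \<subseteq> {1..n} \<Longrightarrow> card W = 2 \<Longrightarrow> l \<in> {1..K} \<Longrightarrow> Inr (W, l) \<in> Gk_vertices n K"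
  unfolding Gk_vertices_def by auto

lemma Gk_edgeI:
  "a \<in> W \<Longrightarrow> W \<subseteq> {1..n} \<Longrightarrow> card W = 2 \<Longrightarrow> l \<in> {1..K} \<Longrightarrow> {Inl a, Inr (W, l)} \<in> Gk_edges n K"
  unfolding Gk_edges_def by blast

lemma card_labels_outside:
  assumes "finite B"
  shows "K - card B \<le> card {l \<in> {1..K}. Inr (W, l) \<notin> B}"
proof -
  let ?M = "{l \<in> {1..K}. Inr (W, l) \<in> B}"
  have M: "card ?M \<le> card B"
    by (rule card_inj_on_le[of "\<lambda>l. Inr (W, l)"]) (auto intro: inj_onI assms)
  have "card {1..K} - card ?M \<le> card ({1..K} - ?M)"
    by (rule diff_card_le_card_Diff) simp
  moreover have "{1..K} - ?M = {l \<in> {1..K}. Inr (W, l) \<notin> B}" by auto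
  ultimately have "K - card ?M \<le> card {l \<in> {1..K}. Inr (W, l) \<notin> B}" by simp
  then show ?thesis using M by linarith
qed

lemma card_le_cross_at_if_labels_cross:
  assumes "finite EG" and "\<forall>l \<in> L. \<exists>x. {Inl x, Inr (W, l)} \<in> crossing_edges EG N ET X t"
  shows "card L \<le> cross_at EG N ET X t"
proof -
  obtain x where x: "\<forall>l \<in> L. {Inl (x l), Inr (W, l)} \<in> crossing_edges EG N ET X t"
    using bchoice[OF assms(2)] by blast
  have "inj_on (\<lambda>l. {Inl (x l), Inr (W, l)}) L" by (rule inj_onI) (auto simp: doubleton_eq_iff)
  moreover have "(\<lambda>l. {Inl (x l), Inr (W, l)}) ` L \<subseteq> crossing_edges EG N ET X t"
    using x by blast
  moreover have "finite (crossing_edges EG N ET X t)"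
    using assms(1) by (simp add: crossing_edges_def)
  ultimately show ?thesis
    unfolding cross_at_eq_card_crossing_edges by (rule card_inj_on_le)
qed

lemma Gk_cross_at_ge_if_separated:
  assumes dec: "tree_cut_decomp (Gk_vertices n K) (Gk_edges n K) N ET X" and "t \<in> N"
    and ab: "a \<in> {1..n}" "b \<in> {1..n}" "Inl a \<in> X sa" "Inl b \<in> X sb"
    and s: "sa \<in> N - {t}" "sb \<in> N - {t}"
    and sep: "\<not> reach_in (N - {t}) ET sa sb"
  shows "K - card (X t) \<le> cross_at (Gk_edges n K) N ET X t"
proof -
  have "a \<noteq> b"
  proof
    assume "a = b"
    then have "sa = sb" using tree_cut_decomp_bag_unique[OF dec, of sa sb "Inl a"] ab(3,4) s by simp
    then show False using sep reach_in_refl[OF s(1)] by simp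
  qed
  define W where "W = {a, b}"
  have W: "W \<subseteq> {1..n}" "card W = 2" "a \<in> W" "b \<in> W"
    using ab \<open>a \<noteq> b\<close> by (auto simp: W_def)
  let ?L = "{l \<in> {1..K}. Inr (W, l) \<notin> X t}"
  have "K - card (X t) \<le> card ?L"
    by (rule card_labels_outside) (rule tree_cut_decomp_finite_bag[OF dec finite_Gk_vertices \<open>t \<in> N\<close>])
  moreover have "card ?L \<le> cross_at (Gk_edges n K) N ET X t"
  proof (rule card_le_cross_at_if_labels_cross[OF finite_Gk_edges], intro ballI)
    fix l assume l: "l \<in> ?L"
    then have lK: "l \<in> {1..K}" and notin: "Inr (W, l) \<notin> X t" by auto
    obtain s where "s \<in> N" "Inr (W, l) \<in> X s"
      using tree_cut_decomp_bag_exists[OF dec Inr_in_Gk_vertices[OF W(1,2) lK]] by blast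
    moreover from this notin have "s \<in> N - {t}" by auto
    ultimately have "{Inl a, Inr (W, l)} \<in> crossing_edges (Gk_edges n K) N ET X t
        \<or> {Inl b, Inr (W, l)} \<in> crossing_edges (Gk_edges n K) N ET X t"
      using crossing_edge_at_separating_node[OF Gk_edgeI[OF W(3,1,2) lK] Gk_edgeI[OF W(4,1,2) lK]
          s _ ab(3,4) _ sep] by blast
    then show "\<exists>x. {Inl x, Inr (W, l)} \<in> crossing_edges (Gk_edges n K) N ET X t" by blast
  qed
  ultimately show ?thesis by linarith
qed

lemma Gk_cross_at_tree_edge:
  assumes dec: "tree_cut_decomp (Gk_vertices n K) (Gk_edges n K) N ET X"
    and e: "{t, t'} \<in> ET" "t \<noteq> t'" "t \<in> N" "t' \<in> N"
    and pq: "p \<in> {1..n}" "q \<in> {1..n}" "Inl p \<in> X t" "Inl q \<in> X t'"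
  shows "K - (card (X t) + card (X t'))
           \<le> cross_at (Gk_edges n K) N ET X t + cross_at (Gk_edges n K) N ET X t'"
proof -
  have acyc: "\<not> has_cycle ET" using dec by (simp add: tree_cut_decomp_def is_tree_def)
  have "p \<noteq> q" using tree_cut_decomp_bag_unique[OF dec e(3,4) pq(3)] pq(4) e(2) by auto
  define W where "W = {p, q}"
  have W: "W \<subseteq> {1..n}" "card W = 2" "p \<in> W" "q \<in> W"
    using pq \<open>p \<noteq> q\<close> by (auto simp: W_def)
  let ?L = "{l \<in> {1..K}. Inr (W, l) \<notin> X t \<union> X t'}"
  let ?L1 = "{l \<in> ?L. {Inl q, Inr (W, l)} \<in> crossing_edges (Gk_edges n K) N ET X t}"
  let ?L2 = "{l \<in> ?L. {Inl p, Inr (W, l)} \<in> crossing_edges (Gk_edges n K) N ET X t'}"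
  have "finite (X t \<union> X t')"
    using tree_cut_decomp_finite_bag[OF dec finite_Gk_vertices] e by blast
  then have outside: "K - (card (X t) + card (X t')) \<le> card ?L"
    using card_labels_outside[of "X t \<union> X t'" K W] card_Un_le[of "X t" "X t'"] by linarith
  have "?L \<subseteq> ?L1 \<union> ?L2"
  proof
    fix l assume l: "l \<in> ?L"
    then have lK: "l \<in> {1..K}" and notin: "Inr (W, l) \<notin> X t \<union> X t'" by auto
    obtain s where "s \<in> N" "Inr (W, l) \<in> X s"
      using tree_cut_decomp_bag_exists[OF dec Inr_in_Gk_vertices[OF W(1,2) lK]] by blast
    moreover from this notin have "s \<in> N - {t, t'}" by auto
    ultimately have "{Inl q, Inr (W, l)} \<in> crossing_edges (Gk_edges n K) N ET X t
        \<or> {Inl p, Inr (W, l)} \<in> crossing_edges (Gk_edges n K) N ET X t'"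
      using crossing_edge_at_tree_edge[OF acyc e Gk_edgeI[OF W(3,1,2) lK] Gk_edgeI[OF W(4,1,2) lK]
          pq(3,4)] by blast
    then show "l \<in> ?L1 \<union> ?L2" using l by blast
  qed
  then have "card ?L \<le> card (?L1 \<union> ?L2)" by (rule card_mono[rotated]) simp
  also have "\<dots> \<le> card ?L1 + card ?L2" by (rule card_Un_le)
  finally have "card ?L \<le> card ?L1 + card ?L2" .
  moreover have "card ?L1 \<le> cross_at (Gk_edges n K) N ET X t"
    by (rule card_le_cross_at_if_labels_cross[OF finite_Gk_edges]) auto
  moreover have "card ?L2 \<le> cross_at (Gk_edges n K) N ET X t'"
    by (rule card_le_cross_at_if_labels_cross[OF finite_Gk_edges]) auto
  ultimately show ?thesis using outside by linarith
qed

lemma Inl_outside_small_set: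
  fixes B :: "(nat + 'b) set"
  assumes "finite B" "card B < n"
  shows "\<exists>a \<in> {1..n}. Inl a \<notin> B"
proof (rule ccontr)
  assume "\<not> ?thesis"
  then have "Inl ` {1..n} \<subseteq> B" by blast
  then have "card (Inl ` {1..n} :: (nat + 'b) set) \<le> card B" by (rule card_mono[OF assms(1)])
  then show False using assms(2) by (simp add: card_image)
qed

lemma Gk_crossing_number_lower_bound:
  assumes dec: "tree_cut_decomp (Gk_vertices n K) (Gk_edges n K) N ET X"
    and thick: "thickness N X \<le> \<alpha>" and "\<alpha> < n"
  shows "K - 2 * \<alpha> \<le> 2 * crossing_number (Gk_edges n K) N ET X"
proof -
  let ?cr = "cross_at (Gk_edges n K) N ET X"
  let ?c = "crossing_number (Gk_edges n K) N ET X"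
  have fin: "finite N" and conn: "\<forall>u \<in> N. \<forall>v \<in> N. reach_in N ET u v"
    and acyc: "\<not> has_cycle ET"
    using dec by (simp_all add: tree_cut_decomp_def is_tree_def)
  have bag: "card (X s) \<le> \<alpha>" if "s \<in> N" for s
    using card_bag_le_thickness[OF fin that, of X] thick by linarith
  have cr: "?cr s \<le> ?c" if "s \<in> N" for s
    using cross_at_le_crossing_number[OF fin that] .
  have one: "1 \<in> {1..n}" using \<open>\<alpha> < n\<close> by simp
  obtain t where t: "t \<in> N" "Inl 1 \<in> X t"
    using tree_cut_decomp_bag_exists[OF dec Inl_in_Gk_vertices[OF one]] by blast
  have "card (X t) < n" using bag[OF t(1)] \<open>\<alpha> < n\<close> by linarith
  then obtain a where a: "a \<in> {1..n}" "Inl a \<notin> X t"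
    using Inl_outside_small_set[OF tree_cut_decomp_finite_bag[OF dec finite_Gk_vertices t(1)]]
    by blast
  obtain c where c: "c \<in> N" "Inl a \<in> X c"
    using tree_cut_decomp_bag_exists[OF dec Inl_in_Gk_vertices[OF a(1)]] by blast
  have "c \<noteq> t" using a(2) c(2) by blast
  then obtain t' where t': "{t, t'} \<in> ET" "t' \<in> N" "t' \<noteq> t" "reach_in (N - {t}) ET t' c"
    using reach_in_first_step[of N ET t c] conn t(1) c(1) by blast
  show ?thesis
  proof (cases "\<exists>q \<in> {1..n}. Inl q \<in> X t'")
    case True
    then obtain q where "q \<in> {1..n}" "Inl q \<in> X t'" by blast
    then have "K - (card (X t) + card (X t')) \<le> ?cr t + ?cr t'"
      using Gk_cross_at_tree_edge[OF dec t'(1) _ t(1) t'(2) one] t(2) t'(3) by metis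
    then show ?thesis using cr[OF t(1)] cr[OF t'(2)] bag[OF t(1)] bag[OF t'(2)] by linarith
  next
    case False
    then have "c \<noteq> t'" using a(1) c(2) by blast
    have "\<not> reach_in (N - {t'}) ET t c"
      using acyclic_edge_separates[OF acyc t'(1) _ t'(2)] t'(3,4) by blast
    then have "K - card (X t') \<le> ?cr t'"
      using Gk_cross_at_ge_if_separated[OF dec t'(2) one a(1) t(2) c(2)] t(1) c(1) t'(3) \<open>c \<noteq> t'\<close>
      by blast
    then show ?thesis using cr[OF t'(2)] bag[OF t'(2)] by linarith
  qed
qed

theorem lemma3p3:
  fixes \<alpha> k :: nat
  assumes "\<alpha> \<ge> 1" and "k \<ge> 1"
  shows "ecrw \<alpha> (Gk_vertices (\<alpha> + 1) (3 * k + 3 * \<alpha> - 1))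
                 (Gk_edges (\<alpha> + 1) (3 * k + 3 * \<alpha> - 1)) \<ge> k + 1"
proof -
  define n where "n = \<alpha> + 1"
  define K where "K = 3 * k + 3 * \<alpha> - 1"
  let ?S = "{crossing_number (Gk_edges n K) N ET X | (N :: nat set) ET X.
       tree_cut_decomp (Gk_vertices n K) (Gk_edges n K) N ET X \<and> thickness N X \<le> \<alpha>}"
  have "Gk_vertices n K \<noteq> {}" using Inl_in_Gk_vertices[of 1 n K] by (auto simp: n_def)
  then obtain N :: "nat set" and ET X where
    "tree_cut_decomp (Gk_vertices n K) (Gk_edges n K) N ET X" "thickness N X \<le> 1"
    using tree_cut_decomp_thickness_one[OF finite_Gk_vertices] by blast
  then have "?S \<noteq> {}" using assms(1) by fastforce
  moreover have "k + 1 \<le> x" if "x \<in> ?S" for x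
  proof -
    have "K - 2 * \<alpha> \<le> 2 * x"
      using that Gk_crossing_number_lower_bound[of n K _ _ _ \<alpha>] unfolding n_def by fastforce
    then show ?thesis using assms by (simp add: K_def)
  qed
  ultimately have "k + 1 \<le> Inf ?S" by (blast intro: cInf_greatest)
  then show ?thesis unfolding ecrw_def n_def K_def .
qed

end
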